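(* Let $(M,g,J)$ be a Kaehler manifold. The following are equivalent: (a) $M$ is semisymmetric, i.e. $R\cdot R=0$; (b) $R\cdot R(u,v,v,u;x,Jx)=0$ for every $p\in M$ and all $x,u,v\in T_pM$; (c) $R\cdot R(u,Ju,Ju,u;x,y)=0$ for every $p\in M$ and all $x,y,u\in T_pM$; (d) $R\cdot R(u,Ju,Ju,u;x,Jx)=0$ for every $p\in M$ and all $x,u\in T_pM$.
   Context: A Kaehler manifold $(M,g,J)$: $J^2=-\mathrm{Id}$, $g(JX,JY)=g(X,Y)$, $\nabla J=0$ for the Levi-Civita connection. Curvature: $R(X,Y)Z=\nabla_X\nabla_YZ-\nabla_Y\nabla_XZ-\nabla_{[X,Y]}Z$, $R(X,Y,Z,W)=g(R(X,Y)Z,W)$. The $(0,6)$-tensor $R\cdot R$ is $R\cdot R(X_1,X_2,X_3,X_4;X,Y)=-R(R(X,Y)X_1,X_2,X_3,X_4)-R(X_1,R(X,Y)X_2,X_3,X_4)-R(X_1,X_2,R(X,Y)X_3,X_4)-R(X_1,X_2,X_3,R(X,Y)X_4)$. *)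

theory Defs
  imports "HOL-Analysis.Analysis"
begin

text \<open>Pointwise (algebraic) model of a Kaehler manifold at a point p:
  the tangent space T_pM is a finite-dimensional real inner product space 'a
  (metric g = inner), J is the complex structure on T_pM, and R is the
  curvature operator R(X,Y)Z at p.\<close>

definition hermitian_structure :: "('a::real_inner \<Rightarrow> 'a) \<Rightarrow> bool" where
  "hermitian_structure J \<longleftrightarrow> linear J \<and> (\<forall>x. J (J x) = - x)
     \<and> (\<forall>x y. inner (J x) (J y) = inner x y)"

text \<open>Curvature operator of a Kaehler manifold at a point: trilinear, skew in X Y,
  metric (R(X,Y,Z,W) = - R(X,Y,W,Z)), first Bianchi identity, and
  R(X,Y) J = J R(X,Y) (consequence of nabla J = 0).\<close>

definition kaehler_curvature ::
  "('a::real_inner \<Rightarrow> 'a) \<Rightarrow> ('a \<Rightarrow> 'a \<Rightarrow> 'a \<Rightarrow> 'a) \<Rightarrow> bool" where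
  "kaehler_curvature J R \<longleftrightarrow> hermitian_structure J
     \<and> (\<forall>y z. linear (\<lambda>x. R x y z)) \<and> (\<forall>x z. linear (\<lambda>y. R x y z))
     \<and> (\<forall>x y. linear (\<lambda>z. R x y z))
     \<and> (\<forall>x y z. R x y z = - R y x z)
     \<and> (\<forall>x y z w. inner (R x y z) w = - inner (R x y w) z)
     \<and> (\<forall>x y z. R x y z + R y z x + R z x y = 0)
     \<and> (\<forall>x y z. R x y (J z) = J (R x y z))"

definition R4 :: "('a::real_inner \<Rightarrow> 'a \<Rightarrow> 'a \<Rightarrow> 'a) \<Rightarrow> 'a \<Rightarrow> 'a \<Rightarrow> 'a \<Rightarrow> 'a \<Rightarrow> real" where
  "R4 R x y z w = inner (R x y z) w"

definition RR :: "('a::real_inner \<Rightarrow> 'a \<Rightarrow> 'a \<Rightarrow> 'a) \<Rightarrow> 'a \<Rightarrow> 'a \<Rightarrow> 'a \<Rightarrow> 'a \<Rightarrow> 'a \<Rightarrow> 'a \<Rightarrow> real" where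
  "RR R x1 x2 x3 x4 x y =
     - R4 R (R x y x1) x2 x3 x4 - R4 R x1 (R x y x2) x3 x4
     - R4 R x1 x2 (R x y x3) x4 - R4 R x1 x2 x3 (R x y x4)"

end

theory Submission
  imports Defs
begin

text \<open>For fixed \<open>x, y\<close> the endomorphism \<open>R(x,y)\<close> commutes with \<open>J\<close>, so
  \<open>(R\<cdot>R)(-,-,-,-;x,y)\<close>, its action on \<open>R\<close> as a derivation, is again an algebraic
  curvature tensor invariant under \<open>J\<close>. Such a tensor is determined by its holomorphic
  sectional curvature, which gives (c) \<open>\<Longrightarrow>\<close> (a). For fixed \<open>u\<close>, the form
  \<open>(x, y) \<mapsto> (R\<cdot>R)(u,Ju,Ju,u;x,y)\<close> is bilinear, skew and \<open>J\<close>-invariant, and such a form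
  vanishes as soon as it vanishes on all pairs \<open>(x, Jx)\<close>; this gives (d) \<open>\<Longrightarrow>\<close> (c).\<close>

locale algebraic_curvature_tensor =
  fixes T :: "'a::real_vector \<Rightarrow> 'a \<Rightarrow> 'a \<Rightarrow> 'a \<Rightarrow> real"
  assumes linear_1: "linear (\<lambda>a. T a b c d)"
    and linear_2: "linear (\<lambda>b. T a b c d)"
    and linear_3: "linear (\<lambda>c. T a b c d)"
    and linear_4: "linear (\<lambda>d. T a b c d)"
    and skew_12: "T b a c d = - T a b c d"
    and skew_34: "T a b d c = - T a b c d"
    and bianchi: "T a b c d + T b c a d + T c a b d = 0"
begin

lemmas add =
  linear_add[OF linear_1, simplified] linear_add[OF linear_2, simplified]
  linear_add[OF linear_3, simplified] linear_add[OF linear_4, simplified]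

lemmas minus =
  linear_neg[OF linear_1, simplified] linear_neg[OF linear_2, simplified]
  linear_neg[OF linear_3, simplified] linear_neg[OF linear_4, simplified]

lemmas scale =
  linear_scale[OF linear_1, simplified] linear_scale[OF linear_2, simplified]
  linear_scale[OF linear_3, simplified] linear_scale[OF linear_4, simplified]

lemmas diff =
  linear_diff[OF linear_1, simplified] linear_diff[OF linear_2, simplified]
  linear_diff[OF linear_3, simplified] linear_diff[OF linear_4, simplified]

text \<open>Sum of the Bianchi identities of the four cyclic triples taken from \<open>a, b, c, d\<close>.\<close>
lemma pair_symmetric: "T a b c d = T c d a b"
  using bianchi[of a b c d] bianchi[of b c d a] bianchi[of c d a b] bianchi[of d a b c]
    skew_12[of a b] skew_12[of b c] skew_12[of c a] skew_12[of c d] skew_12[of d b]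
    skew_12[of d a] skew_12[of a c] skew_12[of b d]
    skew_12[of b c d a] skew_12[of c d b a] skew_12[of d b c a] skew_12[of a c d b]
    skew_12[of d a c b] skew_12[of b d a c] skew_12[of a b d c] skew_12[of c a b d]
    skew_12[of b c a d] skew_12[of d c a b]
    skew_34[of b c a d] skew_34[of a b c d] skew_34[of c d b a] skew_34[of d b c a]
    skew_34[of d a c b] skew_34[of a c d b] skew_34[of a b d c] skew_34[of b d a c]
    skew_34[of c a b d] skew_34[of b c d a] skew_34[of c d a b] skew_34[of d a b c]
  by linarith

lemma eq_0_if_sectional_eq_0:
  assumes sectional: "\<And>x y. T x y y x = 0"
  shows "T a b c d = 0"
proof -
  have three_point: "T x y z x = 0" for x y z
    using sectional[of x "y + z"] sectional[of x y] sectional[of x z]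
      pair_symmetric[of x z y x] skew_12[of y x x z] skew_34[of x y x z]
    by (simp add: add)
  have swap_14: "T x y z w = - T w y z x" for x y z w
    using three_point[of "x + w" y z] three_point[of x y z] three_point[of w y z]
    by (simp add: add)
  have "T a b c d = T b c a d"
    using swap_14[of a b c d] swap_14[of d b a c] skew_34[of d b c a] skew_12[of c b a d]
    by simp
  moreover have "T b c a d = T c a b d"
    using swap_14[of b c a d] swap_14[of d c b a] skew_34[of d c a b] skew_12[of a c b d]
    by simp
  ultimately show ?thesis
    using bianchi[of a b c d] by linarith
qed

end

locale kaehler_curvature_tensor = algebraic_curvature_tensor T
  for T :: "'a::real_vector \<Rightarrow> 'a \<Rightarrow> 'a \<Rightarrow> 'a \<Rightarrow> real" +
  fixes J :: "'a \<Rightarrow> 'a"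
  assumes linear_J: "linear J"
    and J_J: "J (J x) = - x"
    and J_invariant_34: "T a b (J c) (J d) = T a b c d"
begin

lemma J_invariant_12: "T (J a) (J b) c d = T a b c d"
  using pair_symmetric J_invariant_34 by metis

lemma J_add: "J (x + y) = J x + J y" and J_diff: "J (x - y) = J x - J y"
  by (simp_all add: linear_add linear_diff linear_J)

text \<open>Polarizing \<open>T u (J u) (J u) u = 0\<close> at \<open>u = x \<plusminus> y\<close>: the Bianchi identity and the
  \<open>J\<close>-invariance turn all mixed terms into multiples of \<open>T x y y x\<close> and
  \<open>T x (J y) (J y) x\<close>.\<close>
lemma sectional_eq_0_if_holomorphic_sectional_eq_0:
  assumes holomorphic: "\<And>u. T u (J u) (J u) u = 0"
  shows "T x y y x = 0"
proof -
  have polarized: "2 * T x y y x + 6 * T x (J y) (J y) x = 0" for x y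
  proof -
    have mixed: "T x (J x) (J y) y + T x (J y) (J x) y + T x (J y) (J y) x + T y (J x) (J x) y
        + T y (J x) (J y) x + T y (J y) (J x) x = 0"
      using holomorphic[of "x + y"] holomorphic[of "x - y"] holomorphic[of x] holomorphic[of y]
      by (simp add: add diff J_add J_diff)
    have m2: "T x (J y) (J x) y = T x (J y) (J y) x"
      using J_invariant_34[of x "J y" x "J y"] skew_34[of x "J y" x "J y"] by (simp add: J_J minus)
    have m4: "T y (J x) (J x) y = T x (J y) (J y) x"
      using J_invariant_12[of y "J x" "J x" y] skew_12[of "J y" x "J x" y] m2 by (simp add: J_J minus)
    have m5: "T y (J x) (J y) x = T x (J y) (J y) x"
      using pair_symmetric[of y "J x" "J y" x] skew_12[of "J y" x y "J x"]
        skew_34[of x "J y" y "J x"] m2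
      by simp
    have m6: "T y (J y) (J x) x = T x (J x) (J y) y"
      using pair_symmetric[of y "J y" "J x" x] skew_12[of "J x" x y "J y"] skew_34[of x "J x" y "J y"]
      by simp
    have m1: "T x (J x) (J y) y = T x y y x + T x (J y) (J y) x"
      using bianchi[of x "J x" "J y" y] J_invariant_12[of x y x y] skew_12[of x "J y" "J x" y]
        skew_34[of x y x y] m2
      by simp
    show ?thesis
      using mixed m1 m2 m4 m5 m6 by linarith
  qed
  show ?thesis
    using polarized[of x y] polarized[of x "J y"] by (simp add: J_J minus)
qed

lemma eq_0_if_holomorphic_sectional_eq_0:
  assumes "\<And>u. T u (J u) (J u) u = 0"
  shows "T a b c d = 0"
  using eq_0_if_sectional_eq_0 sectional_eq_0_if_holomorphic_sectional_eq_0 assms by blast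

end

text \<open>With \<open>D = R(x,y)\<close> this is \<open>(R\<cdot>R)(-,-,-,-;x,y)\<close>.\<close>
definition derivation_action ::
  "('a \<Rightarrow> 'a) \<Rightarrow> ('a \<Rightarrow> 'a \<Rightarrow> 'a \<Rightarrow> 'a \<Rightarrow> real) \<Rightarrow> 'a \<Rightarrow> 'a \<Rightarrow> 'a \<Rightarrow> 'a \<Rightarrow> real" where
  "derivation_action D T a b c d =
     - T (D a) b c d - T a (D b) c d - T a b (D c) d - T a b c (D d)"

lemma algebraic_curvature_tensor_derivation_action:
  assumes "algebraic_curvature_tensor T" and "linear D"
  shows "algebraic_curvature_tensor (derivation_action D T)"
proof -
  interpret algebraic_curvature_tensor T by fact
  have D: "D (x + y) = D x + D y" "D (- x) = - D x" "D (r *\<^sub>R x) = r *\<^sub>R D x" for x y r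
    by (simp_all add: linear_add linear_neg linear_scale \<open>linear D\<close>)
  show ?thesis
  proof (rule algebraic_curvature_tensor.intro)
    show "linear (\<lambda>a. derivation_action D T a b c d)" for b c d
      by (simp add: linear_iff derivation_action_def add scale D algebra_simps)
    show "linear (\<lambda>b. derivation_action D T a b c d)" for a c d
      by (simp add: linear_iff derivation_action_def add scale D algebra_simps)
    show "linear (\<lambda>c. derivation_action D T a b c d)" for a b d
      by (simp add: linear_iff derivation_action_def add scale D algebra_simps)
    show "linear (\<lambda>d. derivation_action D T a b c d)" for a b c
      by (simp add: linear_iff derivation_action_def add scale D algebra_simps)
    show "derivation_action D T b a c d = - derivation_action D T a b c d"
      "derivation_action D T a b d c = - derivation_action D T a b c d" for a b c d
      by (simp_all add: derivation_action_def skew_12[of a] skew_12[of "D a"]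
          skew_34[of _ _ c] skew_34[of _ _ "D c"])
    show "derivation_action D T a b c d + derivation_action D T b c a d
        + derivation_action D T c a b d = 0" for a b c d
      using bianchi[of "D a" b c d] bianchi[of a "D b" c d] bianchi[of a b "D c" d]
        bianchi[of a b c "D d"]
      unfolding derivation_action_def by linarith
  qed
qed

lemma kaehler_curvature_tensor_derivation_action:
  assumes "kaehler_curvature_tensor T J" and "linear D" and "\<And>x. D (J x) = J (D x)"
  shows "kaehler_curvature_tensor (derivation_action D T) J"
proof -
  interpret kaehler_curvature_tensor T J by fact
  have "algebraic_curvature_tensor (derivation_action D T)"
    using algebraic_curvature_tensor_axioms assms(2)
    by (rule algebraic_curvature_tensor_derivation_action)
  moreover have "derivation_action D T a b (J c) (J d) = derivation_action D T a b c d" for a b c d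
    using J_invariant_34[of "D a" b c d] J_invariant_34[of a "D b" c d]
      J_invariant_34[of a b "D c" d] J_invariant_34[of a b c "D d"]
    by (simp add: derivation_action_def assms(3))
  ultimately show ?thesis
    using linear_J J_J by (intro kaehler_curvature_tensor.intro kaehler_curvature_tensor_axioms.intro)
qed

text \<open>Polarizing \<open>Q x (J x) = 0\<close> gives \<open>Q x (J w) = - Q w (J x)\<close>, while skewness and
  \<open>J\<close>-invariance give \<open>Q x (J w) = Q w (J x)\<close>.\<close>
lemma bilinear_eq_0_if_J_isotropic:
  fixes Q :: "'a::real_vector \<Rightarrow> 'a \<Rightarrow> real"
  assumes "bilinear Q" and skew: "\<And>a b. Q b a = - Q a b"
    and J_invariant: "\<And>a b. Q (J a) (J b) = Q a b"
    and "linear J" and J_J: "\<And>x. J (J x) = - x"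
    and isotropic: "\<And>x. Q x (J x) = 0"
  shows "Q a b = 0"
proof -
  have "Q x (J w) = 0" for x w
  proof -
    have "Q x (J w) + Q w (J x) = 0"
      using isotropic[of "x + w"] isotropic[of x] isotropic[of w]
      by (simp add: linear_add \<open>linear J\<close> bilinear_ladd bilinear_radd \<open>bilinear Q\<close>)
    moreover have "Q w (J x) = Q x (J w)"
      using J_invariant[of w "J x"] skew[of "J w" x]
      by (simp add: J_J bilinear_rneg \<open>bilinear Q\<close>)
    ultimately show ?thesis by simp
  qed
  from this[of a "- J b"] show ?thesis
    by (simp add: linear_neg \<open>linear J\<close> J_J)
qed

lemma kaehler_curvatureD:
  assumes "kaehler_curvature J R"
  shows "linear J" "J (J v) = - v" "inner (J v) (J w) = inner v w"
    and "linear (\<lambda>x. R x y z)" "linear (\<lambda>y. R x y z)" "linear (R x y)"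
    and "R y x z = - R x y z" "inner (R x y w) z = - inner (R x y z) w"
    and "R x y z + R y z x + R z x y = 0" "R x y (J z) = J (R x y z)"
proof -
  note K = assms[unfolded kaehler_curvature_def hermitian_structure_def]
  have "\<forall>v w. inner (J v) (J w) = inner v w"
    using K by (elim conjE) assumption
  then show "inner (J v) (J w) = inner v w"
    by blast
  show "linear J" "J (J v) = - v" "linear (\<lambda>x. R x y z)" "linear (\<lambda>y. R x y z)" "linear (R x y)"
    "R y x z = - R x y z" "inner (R x y w) z = - inner (R x y z) w"
    "R x y z + R y z x + R z x y = 0" "R x y (J z) = J (R x y z)"
    using K by blast+
qed

lemma kaehler_curvature_tensor_R4:
  assumes "kaehler_curvature J R"
  shows "kaehler_curvature_tensor (R4 R) J"
proof (intro kaehler_curvature_tensor.intro algebraic_curvature_tensor.intro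
    kaehler_curvature_tensor_axioms.intro)
  note K = kaehler_curvatureD[OF assms]
  show "linear (\<lambda>a. R4 R a b c d)" "linear (\<lambda>b. R4 R a b c d)" "linear (\<lambda>c. R4 R a b c d)"
    for a b c d
    using K(4)[of b c] K(5)[of a c] K(6)[of a b]
    by (simp_all add: linear_iff R4_def inner_add_left)
  show "linear (\<lambda>d. R4 R a b c d)" for a b c
    by (simp add: linear_iff R4_def inner_add_right)
  show "R4 R b a c d = - R4 R a b c d" "R4 R a b d c = - R4 R a b c d" for a b c d
    by (simp_all add: R4_def K(7)[of b a] K(8)[of a b d c])
  show "R4 R a b c d + R4 R b c a d + R4 R c a b d = 0" for a b c d
    by (simp add: R4_def K(9) flip: inner_add_left)
  show "R4 R a b (J c) (J d) = R4 R a b c d" for a b c d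
    by (simp add: R4_def K(3) K(10))
qed (fact kaehler_curvatureD[OF assms])+

lemma kaehler_curvature_J_J:
  assumes "kaehler_curvature J R"
  shows "R (J x) (J y) z = R x y z"
proof -
  interpret kaehler_curvature_tensor "R4 R" J
    using assms by (rule kaehler_curvature_tensor_R4)
  have "inner (R (J x) (J y) z - R x y z) w = 0" for w
    using J_invariant_12[of x y z w] by (simp add: R4_def inner_diff_left)
  from this[of "R (J x) (J y) z - R x y z"] show ?thesis
    by simp
qed

lemma kaehler_curvature_tensor_RR:
  assumes "kaehler_curvature J R"
  shows "kaehler_curvature_tensor (\<lambda>a b c d. RR R a b c d x y) J"
proof -
  have "derivation_action (R x y) (R4 R) = (\<lambda>a b c d. RR R a b c d x y)"
    by (simp add: fun_eq_iff RR_def derivation_action_def)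
  moreover have "kaehler_curvature_tensor (derivation_action (R x y) (R4 R)) J"
    using kaehler_curvature_tensor_R4[OF assms] kaehler_curvatureD(6,10)[OF assms]
    by (rule kaehler_curvature_tensor_derivation_action)
  ultimately show ?thesis
    by (simp only:)
qed

lemma RR_bilinear:
  assumes "kaehler_curvature J R"
  shows "bilinear (\<lambda>x y. RR R a b c d x y)"
proof -
  interpret kaehler_curvature_tensor "R4 R" J
    using assms by (rule kaehler_curvature_tensor_R4)
  note linear_R = kaehler_curvatureD(4-6)[OF assms]
  have R_add: "R (u + v) y z = R u y z + R v y z" "R x (u + v) z = R x u z + R x v z"
    and R_scale: "R (r *\<^sub>R u) y z = r *\<^sub>R R u y z" "R x (r *\<^sub>R u) z = r *\<^sub>R R x u z"
    for x y z u v r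
    using linear_add[OF linear_R(1)] linear_add[OF linear_R(2)]
      linear_scale[OF linear_R(1)] linear_scale[OF linear_R(2)]
    by simp_all
  have "linear (\<lambda>x. RR R a b c d x y)" for y
  proof (rule linearI)
    show "RR R a b c d (u + v) y = RR R a b c d u y + RR R a b c d v y" for u v
      by (simp add: RR_def R_add add)
    show "RR R a b c d (r *\<^sub>R u) y = r *\<^sub>R RR R a b c d u y" for r u
      by (simp add: RR_def R_scale scale right_diff_distrib)
  qed
  moreover have "linear (\<lambda>y. RR R a b c d x y)" for x
  proof (rule linearI)
    show "RR R a b c d x (u + v) = RR R a b c d x u + RR R a b c d x v" for u v
      by (simp add: RR_def R_add add)
    show "RR R a b c d x (r *\<^sub>R u) = r *\<^sub>R RR R a b c d x u" for r u
      by (simp add: RR_def R_scale scale right_diff_distrib)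
  qed
  ultimately show ?thesis
    unfolding bilinear_def by blast
qed

lemma RR_skew:
  assumes "kaehler_curvature J R"
  shows "RR R a b c d y x = - RR R a b c d x y"
proof -
  note K = kaehler_curvatureD[OF assms]
  show ?thesis
    by (simp add: RR_def R4_def K(7)[of y x] linear_neg[OF K(4)] linear_neg[OF K(5)]
        linear_neg[OF K(6)])
qed

lemma RR_J_invariant:
  assumes "kaehler_curvature J R"
  shows "RR R a b c d (J x) (J y) = RR R a b c d x y"
  using kaehler_curvature_J_J[OF assms] by (simp add: RR_def)

lemma RR_eq_0_if_J_isotropic:
  assumes "kaehler_curvature J R" and "\<And>x. RR R a b c d x (J x) = 0"
  shows "RR R a b c d x y = 0"
proof (rule bilinear_eq_0_if_J_isotropic[where Q = "RR R a b c d" and J = J])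
  show "bilinear (RR R a b c d)" "RR R a b c d y x = - RR R a b c d x y"
    "RR R a b c d (J x) (J y) = RR R a b c d x y" "linear J" "J (J x) = - x" for x y
    using assms(1) by (rule RR_bilinear RR_skew RR_J_invariant kaehler_curvatureD)+
qed (fact assms(2))

lemma RR_eq_0_if_holomorphic_sectional_eq_0:
  assumes "kaehler_curvature J R" and "\<And>u. RR R u (J u) (J u) u x y = 0"
  shows "RR R a b c d x y = 0"
  using kaehler_curvature_tensor.eq_0_if_holomorphic_sectional_eq_0[OF
      kaehler_curvature_tensor_RR[OF assms(1)]] assms(2) .

theorem mainTheorem9:
  fixes J :: "'a::euclidean_space \<Rightarrow> 'a"
    and R :: "'a \<Rightarrow> 'a \<Rightarrow> 'a \<Rightarrow> 'a"
  assumes "kaehler_curvature J R"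
  defines "A \<equiv> (\<forall>x1 x2 x3 x4 x y. RR R x1 x2 x3 x4 x y = 0)"
    and "B \<equiv> (\<forall>x u v. RR R u v v u x (J x) = 0)"
    and "C \<equiv> (\<forall>x y u. RR R u (J u) (J u) u x y = 0)"
    and "D \<equiv> (\<forall>x u. RR R u (J u) (J u) u x (J x) = 0)"
  shows "(A \<longleftrightarrow> B) \<and> (A \<longleftrightarrow> C) \<and> (A \<longleftrightarrow> D)"
proof -
  have D_imp_C: "D \<Longrightarrow> C"
    unfolding C_def D_def using RR_eq_0_if_J_isotropic[OF assms(1)] by blast
  have C_imp_A: "C \<Longrightarrow> A"
    unfolding A_def C_def using RR_eq_0_if_holomorphic_sectional_eq_0[OF assms(1)] by blast
  have "A \<Longrightarrow> B" "B \<Longrightarrow> D" "A \<Longrightarrow> C" "C \<Longrightarrow> D"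
    unfolding A_def B_def C_def D_def by blast+
  with D_imp_C C_imp_A show ?thesis
    by blast
qed

end
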